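(* Let $E$ be an ordered Banach space, let $A>0$, let $n\geq 1$ be an integer, and let $f:[0,A]\rightarrow E$ be a continuous $n$-convex function. Then for all $x_{1},\ldots,x_{n}\geq 0$ with $\sum_{i=1}^{n}x_{i}\leq A$, \[ f\Bigl(\sum_{i=1}^{n}x_{i}\Bigr)-\sum_{1\leq i_{1}<\cdots<i_{n-1}\leq n}f(x_{i_{1}}+\cdots+x_{i_{n-1}})+\sum_{1\leq i_{1}<\cdots<i_{n-2}\leq n}f(x_{i_{1}}+\cdots+x_{i_{n-2}})-\cdots+(-1)^{n-1}\sum_{i=1}^{n}f(x_{i})\geq(-1)^{n-1}f(0). \] Equivalently, $\sum_{\varepsilon_{1},\ldots,\varepsilon_{n}\in\{0,1\}}(-1)^{n-(\varepsilon_{1}+\cdots+\varepsilon_{n})}f(\varepsilon_{1}x_{1}+\cdots+\varepsilon_{n}x_{n})\geq 0$.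
   Context: An ordered Banach space is a Banach space $E$ with the order $x\leq y$ iff $y-x\in E_{+}$, where $E_{+}$ is a closed convex cone with $E=E_{+}-E_{+}$, $(-E_{+})\cap E_{+}=\{0\}$, and $0\leq x\leq y$ implies $\|x\|\leq\|y\|$. For distinct points $x_0,\ldots,x_n$ of an interval, the divided difference is $[x_{0},\ldots,x_{n};f]=\sum_{j=0}^{n}\frac{f(x_{j})}{\prod_{k\neq j}(x_{j}-x_{k})}$. A function $f$ (real- or $E$-valued) on an interval is $n$-convex if all its divided differences of order $n$ (on $n+1$ distinct points) are $\geq 0$. *)

theory Defs
  imports "HOL-Analysis.Analysis"
begin

text \<open>The positive cone K of an ordered Banach space E (a real Banach space):
  a closed convex cone, generating, pointed, with monotone norm.\<close>
definition ordered_banach_cone :: "'a::banach set \<Rightarrow> bool" where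
  "ordered_banach_cone K \<longleftrightarrow>
     closed K \<and> convex_cone K \<and>
     (\<forall>z. \<exists>a\<in>K. \<exists>b\<in>K. z = a - b) \<and>
     (uminus ` K) \<inter> K = {0} \<and>
     (\<forall>x y. x \<in> K \<and> y - x \<in> K \<longrightarrow> norm x \<le> norm y)"

definition divdiff :: "(nat \<Rightarrow> real) \<Rightarrow> nat \<Rightarrow> (real \<Rightarrow> 'a::real_vector) \<Rightarrow> 'a" where
  "divdiff x n f = (\<Sum>j\<le>n. (1 / (\<Prod>k\<in>{..n} - {j}. (x j - x k))) *\<^sub>R f (x j))"

definition n_convex_on :: "'a::real_vector set \<Rightarrow> nat \<Rightarrow> real set \<Rightarrow> (real \<Rightarrow> 'a) \<Rightarrow> bool" where
  "n_convex_on K n I f \<longleftrightarrow>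
     (\<forall>x. (\<forall>i\<le>n. x i \<in> I) \<and> inj_on x {..n} \<longrightarrow> divdiff x n f \<in> K)"

end

theory Submission
  imports Defs
begin

(* The alternating sum is the iterated forward difference Delta_{x_1} ... Delta_{x_n} f at 0.
   For h >= 0, the forward difference Delta_h f = f (. + h) - f of an (m+1)-convex function is
   m-convex: its divided difference on a point set P is [P + h; f] - [P; f], and translating the
   points of P by h one at a time, largest first, changes the divided difference at each step by
   h times a divided difference of order m + 1 of f, by the recurrence for divided differences.
   After n differences the function is 0-convex, i.e. its values lie in the cone. *)

definition divided_difference :: "real set \<Rightarrow> (real \<Rightarrow> 'a::real_vector) \<Rightarrow> 'a" where
  "divided_difference P f = (\<Sum>p\<in>P. (1 / (\<Prod>q\<in>P - {p}. (p - q))) *\<^sub>R f p)"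

lemma divdiff_eq_divided_difference:
  assumes "inj_on x {..n}"
  shows "divdiff x n f = divided_difference (x ` {..n}) f"
proof -
  have "(\<Prod>q\<in>x ` {..n} - {x j}. (x j - q)) = (\<Prod>k\<in>{..n} - {j}. (x j - x k))" if "j \<le> n" for j
  proof -
    have "x ` {..n} - {x j} = x ` ({..n} - {j})"
      using assms that by (simp add: inj_on_image_set_diff)
    moreover have "inj_on x ({..n} - {j})"
      using assms by (rule inj_on_subset) auto
    ultimately show ?thesis by (simp add: prod.reindex)
  qed
  then show ?thesis
    using assms by (simp add: divdiff_def divided_difference_def sum.reindex)
qed

lemma n_convex_on_iff_divided_difference:
  "n_convex_on K n I f \<longleftrightarrow>
     (\<forall>P. finite P \<and> card P = Suc n \<and> P \<subseteq> I \<longrightarrow> divided_difference P f \<in> K)"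
proof
  assume convex: "n_convex_on K n I f"
  show "\<forall>P. finite P \<and> card P = Suc n \<and> P \<subseteq> I \<longrightarrow> divided_difference P f \<in> K"
  proof (intro allI impI)
    fix P assume P: "finite P \<and> card P = Suc n \<and> P \<subseteq> I"
    then obtain x where "bij_betw x {..<Suc n} P"
      by (metis bij_betw_from_nat_into_finite lessThan_atLeast0)
    then have "inj_on x {..n}" "x ` {..n} = P"
      by (auto simp: bij_betw_def lessThan_Suc_atMost)
    with P convex show "divided_difference P f \<in> K"
      unfolding n_convex_on_def by (metis atMost_iff divdiff_eq_divided_difference image_subset_iff)
  qed
next
  assume "\<forall>P. finite P \<and> card P = Suc n \<and> P \<subseteq> I \<longrightarrow> divided_difference P f \<in> K"
  then show "n_convex_on K n I f"
    unfolding n_convex_on_def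
    by (metis card_atMost card_image divdiff_eq_divided_difference finite_imageI finite_atMost
        image_subset_iff atMost_iff)
qed

lemma divided_difference_diff:
  "divided_difference P (\<lambda>t. f t - g t) = divided_difference P f - divided_difference P g"
  by (simp add: divided_difference_def scaleR_diff_right sum_subtractf)

lemma divided_difference_translate:
  "divided_difference ((\<lambda>t. t + h) ` P) f = divided_difference P (\<lambda>t. f (t + h))"
proof -
  have inj: "inj_on (\<lambda>t. t + h) A" for A :: "real set"
    by (simp add: inj_on_def)
  have "(\<lambda>t. t + h) ` P - {p + h} = (\<lambda>t. t + h) ` (P - {p})" for p
    by auto
  then show ?thesis
    by (simp add: divided_difference_def sum.reindex[OF inj] prod.reindex[OF inj])
qed

lemma divided_difference_insert:
  assumes "finite P" "a \<notin> P"
  shows "divided_difference (insert a P) f =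
    (1 / (\<Prod>q\<in>P. (a - q))) *\<^sub>R f a +
    (\<Sum>p\<in>P. (1 / ((p - a) * (\<Prod>q\<in>P - {p}. (p - q)))) *\<^sub>R f p)"
proof -
  have "insert a P - {p} = insert a (P - {p})" if "p \<in> P" for p
    using that assms by auto
  then show ?thesis
    using assms by (simp add: divided_difference_def cong: sum.cong)
qed

lemma divided_difference_insert_insert:
  assumes "finite P" "a \<notin> P" "b \<notin> P" "a \<noteq> b"
  shows "divided_difference (insert b P) f - divided_difference (insert a P) f =
    (b - a) *\<^sub>R divided_difference (insert a (insert b P)) f"
proof -
  define Q where "Q p = (\<Prod>q\<in>P - {p}. (p - q))" for p
  have Q_nonzero: "Q p \<noteq> 0" if "p \<in> P" for p
    using assms(1) by (simp add: Q_def)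
  have "insert b P - {p} = insert b (P - {p})" if "p \<in> P" for p
    using that assms by auto
  then have ab: "divided_difference (insert a (insert b P)) f =
      (1 / ((a - b) * (\<Prod>q\<in>P. (a - q)))) *\<^sub>R f a +
      ((1 / ((b - a) * (\<Prod>q\<in>P. (b - q)))) *\<^sub>R f b +
      (\<Sum>p\<in>P. (1 / ((p - a) * ((p - b) * Q p))) *\<^sub>R f p))"
    using assms by (simp add: divided_difference_insert Q_def cong: sum.cong)
  have "(1 / ((p - b) * Q p)) *\<^sub>R f p - (1 / ((p - a) * Q p)) *\<^sub>R f p =
      (b - a) *\<^sub>R (1 / ((p - a) * ((p - b) * Q p))) *\<^sub>R f p" if "p \<in> P" for p
  proof -
    have "1 / ((p - b) * Q p) - 1 / ((p - a) * Q p) = (b - a) * (1 / ((p - a) * ((p - b) * Q p)))"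
      using Q_nonzero[OF that] that assms by (auto simp: divide_simps)
    then show ?thesis
      by (simp flip: scaleR_diff_left)
  qed
  then have sums: "(\<Sum>p\<in>P. (1 / ((p - b) * Q p)) *\<^sub>R f p) - (\<Sum>p\<in>P. (1 / ((p - a) * Q p)) *\<^sub>R f p) =
      (b - a) *\<^sub>R (\<Sum>p\<in>P. (1 / ((p - a) * ((p - b) * Q p))) *\<^sub>R f p)"
    by (simp add: scaleR_sum_right flip: sum_subtractf)
  have "(\<Prod>q\<in>P. (a - q)) \<noteq> 0" "(\<Prod>q\<in>P. (b - q)) \<noteq> 0"
    using assms by auto
  then have "(b - a) * (1 / ((a - b) * (\<Prod>q\<in>P. (a - q)))) = - (1 / (\<Prod>q\<in>P. (a - q)))"
    "(b - a) * (1 / ((b - a) * (\<Prod>q\<in>P. (b - q)))) = 1 / (\<Prod>q\<in>P. (b - q))"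
    using assms(4) by (simp_all add: field_simps)
  with assms show ?thesis
    unfolding ab scaleR_right_distrib scaleR_scaleR sums[symmetric]
    by (simp add: divided_difference_insert Q_def algebra_simps)
qed

lemma divided_difference_translate_minus_in_cone:
  fixes f :: "real \<Rightarrow> 'a::real_vector"
  assumes K: "convex_cone K" and convex: "n_convex_on K (Suc m) I f" and "h \<ge> 0"
    and P: "finite P" "card P = Suc m" "P \<subseteq> I" "(\<lambda>t. t + h) ` P \<subseteq> I"
  shows "divided_difference ((\<lambda>t. t + h) ` P) f - divided_difference P f \<in> K"
proof (cases "h = 0")
  case True
  then show ?thesis
    using K by (simp add: convex_cone_contains_0)
next
  case False
  with \<open>h \<ge> 0\<close> have "h > 0" by simp
  let ?sh = "\<lambda>t. t + h"
  \<comment> \<open>U, the set of points already translated, is an upper set of P; this keeps the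
    translate b + h of the next point distinct from all other current points.\<close>
  have "finite U \<Longrightarrow> U \<subseteq> P \<Longrightarrow> \<forall>p\<in>P - U. \<forall>u\<in>U. p < u \<Longrightarrow>
      divided_difference ((P - U) \<union> ?sh ` U) f - divided_difference P f \<in> K" for U
  proof (induction U rule: finite_linorder_min_induct)
    case empty
    then show ?case
      using K by (simp add: convex_cone_contains_0)
  next
    case (insert b U)
    define B where "B = (P - insert b U) \<union> ?sh ` U"
    have "b \<in> P" using insert.prems by blast
    have moved: "insert b B = (P - U) \<union> ?sh ` U"
      "insert (b + h) B = (P - insert b U) \<union> ?sh ` insert b U"
      using \<open>b \<in> P\<close> insert.hyps by (auto simp: B_def)
    have "b \<notin> ?sh ` U" "b + h \<notin> ?sh ` U"
      using insert.hyps \<open>h > 0\<close> by force+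
    moreover have "b + h \<notin> P - insert b U"
      using insert.prems(2) \<open>h > 0\<close> by (metis insertI1 less_add_same_cancel1 less_asym)
    ultimately have "b \<notin> B" "b + h \<notin> B"
      by (auto simp: B_def)
    have "finite B"
      using P(1) insert.hyps by (simp add: B_def)
    have below: "\<forall>p\<in>P - U. \<forall>u\<in>U. p < u"
    proof (intro ballI)
      fix p u assume "p \<in> P - U" "u \<in> U"
      then show "p < u"
        using insert.hyps insert.prems(2) by (cases "p = b") auto
    qed
    have "u + h \<notin> P - U" if "u \<in> U" for u
      using below that \<open>h \<ge> 0\<close> by (metis add_increasing2 not_less order_refl)
    then have "(P - U) \<inter> ?sh ` U = {}"
      by blast
    then have "card (insert b B) = card (P - U) + card U"
      using insert.hyps P(1) by (simp add: moved card_Un_disjoint card_image)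
    also have "\<dots> = card P"
      using insert.hyps insert.prems P(1) by (simp add: card_Diff_subset card_mono)
    finally have "card B = m"
      using \<open>b \<notin> B\<close> \<open>finite B\<close> P(2) by simp
    moreover have "insert b (insert (b + h) B) \<subseteq> I"
      using \<open>b \<in> P\<close> P(3,4) insert.prems by (auto simp: B_def)
    ultimately have "divided_difference (insert b (insert (b + h) B)) f \<in> K"
      using convex \<open>b \<notin> B\<close> \<open>b + h \<notin> B\<close> \<open>finite B\<close> \<open>h > 0\<close>
      by (simp add: n_convex_on_iff_divided_difference)
    then have step: "divided_difference (insert (b + h) B) f - divided_difference (insert b B) f \<in> K"
      using divided_difference_insert_insert[OF \<open>finite B\<close> \<open>b \<notin> B\<close> \<open>b + h \<notin> B\<close>, of f]
        convex_cone_scaleR[OF K] \<open>h > 0\<close> by simp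
    have "divided_difference (insert b B) f - divided_difference P f \<in> K"
      using insert.IH insert.prems below by (simp add: moved)
    from convex_cone_add[OF K step this]
    have "divided_difference (insert (b + h) B) f - divided_difference P f \<in> K"
      by simp
    then show ?case
      by (simp only: moved)
  qed
  from this[of P] P(1) show ?thesis by simp
qed

lemma n_convex_on_forward_difference:
  assumes "convex_cone K" "n_convex_on K (Suc m) I f" "h \<ge> 0" "J \<subseteq> I" "(\<lambda>t. t + h) ` J \<subseteq> I"
  shows "n_convex_on K m J (\<lambda>t. f (t + h) - f t)"
  unfolding n_convex_on_iff_divided_difference
proof (intro allI impI)
  fix P assume "finite P \<and> card P = Suc m \<and> P \<subseteq> J"
  with assms have "divided_difference ((\<lambda>t. t + h) ` P) f - divided_difference P f \<in> K"
    by (intro divided_difference_translate_minus_in_cone) auto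
  then show "divided_difference P (\<lambda>t. f (t + h) - f t) \<in> K"
    by (simp add: divided_difference_diff divided_difference_translate)
qed

lemma alternating_sum_Pow_insert:
  fixes f :: "real \<Rightarrow> 'a::real_vector"
  assumes "finite S" "a \<notin> S"
  shows "(\<Sum>T\<in>Pow (insert a S). (-1) ^ (card (insert a S) - card T) *\<^sub>R f (sum x T)) =
    (\<Sum>T\<in>Pow S. (-1) ^ (card S - card T) *\<^sub>R (f (sum x T + x a) - f (sum x T)))"
proof -
  have inj: "inj_on (insert a) (Pow S)"
    using assms(2) by (auto simp: inj_on_def)
  have "(\<Sum>T\<in>Pow (insert a S). (-1) ^ (card (insert a S) - card T) *\<^sub>R f (sum x T)) =
      (\<Sum>T\<in>Pow S. (-1) ^ (Suc (card S) - card T) *\<^sub>R f (sum x T)) +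
      (\<Sum>T\<in>Pow S. (-1) ^ (Suc (card S) - card (insert a T)) *\<^sub>R f (sum x (insert a T)))"
    unfolding Pow_insert using assms
    by (subst sum.union_disjoint) (auto simp: sum.reindex[OF inj])
  also have "\<dots> = (\<Sum>T\<in>Pow S. (-1) ^ (card S - card T) *\<^sub>R (f (sum x T + x a) - f (sum x T)))"
    unfolding sum.distrib[symmetric]
  proof (rule sum.cong[OF refl])
    fix T assume "T \<in> Pow S"
    then have "finite T" "a \<notin> T" "card T \<le> card S"
      using assms by (auto intro: finite_subset card_mono)
    then show "(-1) ^ (Suc (card S) - card T) *\<^sub>R f (sum x T) +
        (-1) ^ (Suc (card S) - card (insert a T)) *\<^sub>R f (sum x (insert a T)) =
        (-1) ^ (card S - card T) *\<^sub>R (f (sum x T + x a) - f (sum x T))"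
      by (simp add: Suc_diff_le algebra_simps)
  qed
  finally show ?thesis .
qed

lemma n_convex_on_alternating_sum_in_cone:
  fixes f :: "real \<Rightarrow> 'a::real_vector"
  assumes "convex_cone K" "finite S" "n_convex_on K (card S) {0..A} f"
    "\<forall>i\<in>S. x i \<ge> 0" "sum x S \<le> A"
  shows "(\<Sum>T\<in>Pow S. (-1) ^ (card S - card T) *\<^sub>R f (sum x T)) \<in> K"
  using assms(2-)
proof (induction S arbitrary: A f rule: finite_induct)
  case empty
  then have "divided_difference {0} f \<in> K"
    by (simp add: n_convex_on_iff_divided_difference)
  then show ?case
    by (simp add: divided_difference_def)
next
  case (insert a S)
  have "n_convex_on K (card S) {0..A - x a} (\<lambda>t. f (t + x a) - f t)"
    using insert by (intro n_convex_on_forward_difference[OF assms(1)]) auto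
  moreover have "sum x S \<le> A - x a"
    using insert by simp
  ultimately have "(\<Sum>T\<in>Pow S. (-1) ^ (card S - card T) *\<^sub>R (f (sum x T + x a) - f (sum x T))) \<in> K"
    using insert.IH insert.prems by simp
  then show ?case
    by (simp only: alternating_sum_Pow_insert[OF insert.hyps(1,2)])
qed

theorem theorem3p1:
  fixes K :: "'a::banach set" and f :: "real \<Rightarrow> 'a" and A :: real and n :: nat
    and x :: "nat \<Rightarrow> real"
  assumes "ordered_banach_cone K"
    and "A > 0" and "n \<ge> 1"
    and "continuous_on {0..A} f"
    and "n_convex_on K n {0..A} f"
    and "\<forall>i\<in>{1..n}. x i \<ge> 0"
    and "(\<Sum>i=1..n. x i) \<le> A"
  shows "(\<Sum>S\<in>Pow {1..n}. ((-1) ^ (n - card S)) *\<^sub>R f (\<Sum>i\<in>S. x i)) \<in> K"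
proof -
  have "convex_cone K"
    using assms(1) by (simp add: ordered_banach_cone_def)
  from n_convex_on_alternating_sum_in_cone[OF this, of "{1..n}" A f x] assms(5-7)
  show ?thesis
    by simp
qed

end
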